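(* Let $\mathit{VI}$ be a finite set of variables with $\#\mathit{VI}=n$, let $sh_1,sh_2\in\mathit{SH}$ and $1\le k\le n$. If $\rho_{\mathit{TSD}_k}(sh_1)=\rho_{\mathit{TSD}_k}(sh_2)$ then, for each $\sigma\in\mathit{Subst}$, each $sh'\in\mathit{SH}$ and each $V\in\wp(\mathit{VI})$: $\rho_{\mathit{TSD}_k}(\mathrm{amgu}(sh_1,\sigma))=\rho_{\mathit{TSD}_k}(\mathrm{amgu}(sh_2,\sigma))$, $\rho_{\mathit{TSD}_k}(sh'\cup sh_1)=\rho_{\mathit{TSD}_k}(sh'\cup sh_2)$, and $\rho_{\mathit{TSD}_k}(\mathrm{proj}(sh_1,V))=\rho_{\mathit{TSD}_k}(\mathrm{proj}(sh_2,V))$.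
   Context: $\mathit{SG}=\wp(\mathit{VI})\setminus\{\emptyset\}$ and $\mathit{SH}=\wp(\mathit{SG})$. $\rho_{\mathit{TSD}_k}(sh)=\{\,S\in\mathit{SG}\mid \forall T\subseteq S:\ \#T<k\implies S=\bigcup\{U\in sh\mid T\subseteq U\subseteq S\}\,\}$. Terms are first-order terms over variables; $\mathrm{vars}(t)$ is the set of variables of $t$. A binding is $x\mapsto t$ with $x$ a variable and $t\ne x$ a term; $\mathit{Subst}$ is the set of idempotent substitutions (finite sets of bindings), here with all variables in $\mathit{VI}$. Operations on $\mathit{SH}$: $\mathrm{bin}(sh_1,sh_2)=\{S_1\cup S_2\mid S_1\in sh_1,S_2\in sh_2\}$; $sh^\star=\{S\in\mathit{SG}\mid\exists sh'\subseteq sh: S=\bigcup sh'\}$; $\mathrm{rel}(V,sh)=\{S\in sh\mid S\cap V\ne\emptyset\}$; for a binding $x\mapsto t$ with $v_x=\{x\}$, $v_t=\mathrm{vars}(t)$, $v_{xt}=v_x\cup v_t$: $\mathrm{amgu}(sh,x\mapsto t)=(sh\setminus\mathrm{rel}(v_{xt},sh))\cup\mathrm{bin}(\mathrm{rel}(v_x,sh)^\star,\mathrm{rel}(v_t,sh)^\star)$; extended to substitutions by $\mathrm{amgu}(sh,\emptyset)=sh$ and $\mathrm{amgu}(sh,\{x\mapsto t\}\cup\sigma)=\mathrm{amgu}(\mathrm{amgu}(sh,x\mapsto t),\sigma\setminus\{x\mapsto t\})$. Projection: $\mathrm{proj}(sh,V)=\{S\cap V\mid S\in sh, S\cap V\ne\emptyset\}\cup\{\{x\}\mid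 x\in\mathit{VI}\setminus V\}$. *)

theory Defs
  imports Main
begin

datatype ('f, 'v) trm = Var 'v | Fun 'f "('f, 'v) trm list"

fun vars :: "('f, 'v) trm \<Rightarrow> 'v set" where
  "vars (Var x) = {x}"
| "vars (Fun f ts) = (\<Union>t \<in> set ts. vars t)"

definition SG :: "'v set \<Rightarrow> 'v set set" where
  "SG VI = Pow VI - {{}}"

definition SH :: "'v set \<Rightarrow> 'v set set set" where
  "SH VI = Pow (SG VI)"

definition rho_TSD :: "'v set \<Rightarrow> nat \<Rightarrow> 'v set set \<Rightarrow> 'v set set" where
  "rho_TSD VI k sh = {S \<in> SG VI. \<forall>T. T \<subseteq> S \<longrightarrow> card T < k \<longrightarrow>
                                   S = \<Union>{U \<in> sh. T \<subseteq> U \<and> U \<subseteq> S}}"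

definition bin :: "'v set set \<Rightarrow> 'v set set \<Rightarrow> 'v set set" where
  "bin sh1 sh2 = {S1 \<union> S2 | S1 S2. S1 \<in> sh1 \<and> S2 \<in> sh2}"

definition star :: "'v set \<Rightarrow> 'v set set \<Rightarrow> 'v set set" where
  "star VI sh = {S \<in> SG VI. \<exists>sh'. sh' \<subseteq> sh \<and> S = \<Union>sh'}"

definition rel :: "'v set \<Rightarrow> 'v set set \<Rightarrow> 'v set set" where
  "rel V sh = {S \<in> sh. S \<inter> V \<noteq> {}}"

definition amgu1 :: "'v set \<Rightarrow> 'v set set \<Rightarrow> 'v \<times> ('f, 'v) trm \<Rightarrow> 'v set set" where
  "amgu1 VI sh b = (let vx = {fst b}; vt = vars (snd b); vxt = vx \<union> vt in
      (sh - rel vxt sh) \<union> bin (star VI (rel vx sh)) (star VI (rel vt sh)))"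

(* amgu for a substitution, processing its bindings in the order of a list
   enumerating it *)
fun amgu :: "'v set \<Rightarrow> 'v set set \<Rightarrow> ('v \<times> ('f, 'v) trm) list \<Rightarrow> 'v set set" where
  "amgu VI sh [] = sh"
| "amgu VI sh (b # bs) = amgu VI (amgu1 VI sh b) bs"

(* Subst: idempotent substitutions (finite sets of bindings x \<mapsto> t, t \<noteq> x,
   at most one binding per variable), all variables in VI *)
definition is_subst :: "'v set \<Rightarrow> ('v \<times> ('f, 'v) trm) set \<Rightarrow> bool" where
  "is_subst VI \<sigma> \<longleftrightarrow> finite \<sigma>
     \<and> (\<forall>(x, t) \<in> \<sigma>. t \<noteq> Var x \<and> x \<in> VI \<and> vars t \<subseteq> VI)
     \<and> (\<forall>(x, t) \<in> \<sigma>. \<forall>(y, u) \<in> \<sigma>. x = y \<longrightarrow> t = u)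
     \<and> (\<forall>(x, t) \<in> \<sigma>. \<forall>(y, u) \<in> \<sigma>. x \<notin> vars u)"

definition proj :: "'v set \<Rightarrow> 'v set set \<Rightarrow> 'v set \<Rightarrow> 'v set set" where
  "proj VI sh V = {S \<inter> V | S. S \<in> sh \<and> S \<inter> V \<noteq> {}} \<union> {{x} | x. x \<in> VI - V}"

end

theory Submission
  imports Defs
begin

(*
  On subsets of SG, rho_TSD VI k is a closure operator: extensive, monotone and idempotent.
  Hence equal closures stay equal under every monotone operation F with
  F (rho sh) \<subseteq> rho (F sh), and it remains to check this inclusion for union, projection
  and one amgu step. For the step with variable sets vx and vt, the new elements built from
  rho sh are unions of members of rho sh meeting vx \<union> vt. For k \<ge> 2 every point y of such a
  member C lies in some U \<in> sh with U \<subseteq> C that also contains a point of C \<inter> (vx \<union> vt), so the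
  union is already built from sh. For k = 1 only a covering by elements below it is needed,
  and a covering U meeting vx \<union> vt is joined with two fixed members meeting vx and vt.
*)

lemma mem_rho_TSD_iff:
  "S \<in> rho_TSD VI k sh \<longleftrightarrow> S \<in> SG VI \<and>
     (\<forall>T \<subseteq> S. card T < k \<longrightarrow> (\<forall>y \<in> S. \<exists>U \<in> sh. T \<subseteq> U \<and> U \<subseteq> S \<and> y \<in> U))"
  unfolding rho_TSD_def by blast

lemma mem_rho_TSDI:
  assumes "S \<in> SG VI"
    and "\<And>T y. T \<subseteq> S \<Longrightarrow> card T < k \<Longrightarrow> y \<in> S \<Longrightarrow> \<exists>U \<in> sh. T \<subseteq> U \<and> U \<subseteq> S \<and> y \<in> U"
  shows "S \<in> rho_TSD VI k sh"
  using assms unfolding mem_rho_TSD_iff by blast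

lemma mem_rho_TSDE:
  assumes "S \<in> rho_TSD VI k sh" "T \<subseteq> S" "card T < k" "y \<in> S"
  obtains U where "U \<in> sh" "T \<subseteq> U" "U \<subseteq> S" "y \<in> U"
  using assms unfolding mem_rho_TSD_iff by blast

lemma rho_TSD_subset_SG: "rho_TSD VI k sh \<subseteq> SG VI"
  unfolding rho_TSD_def by blast

lemma mem_rho_TSD_singletonE:
  assumes "S \<in> rho_TSD VI k sh" "1 \<le> k" "y \<in> S"
  obtains U where "U \<in> sh" "U \<subseteq> S" "y \<in> U"
  using mem_rho_TSDE[OF assms(1), of "{}" y] assms(2,3) by auto

lemma mem_rho_TSD_pairE:
  assumes "S \<in> rho_TSD VI k sh" "2 \<le> k" "y \<in> S" "z \<in> S"
  obtains U where "U \<in> sh" "U \<subseteq> S" "y \<in> U" "z \<in> U"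
  using mem_rho_TSDE[OF assms(1), of "{y}" z] assms(2-4) by auto

lemma mem_rho_TSD_1I:
  assumes "finite VI" "S \<in> SG VI" "\<And>y. y \<in> S \<Longrightarrow> \<exists>U \<in> sh. U \<subseteq> S \<and> y \<in> U"
  shows "S \<in> rho_TSD VI 1 sh"
proof (rule mem_rho_TSDI[OF assms(2)])
  fix T y assume "T \<subseteq> S" "card T < 1" "y \<in> S"
  moreover have "finite T"
    using \<open>T \<subseteq> S\<close> assms(1,2) unfolding SG_def by (meson Diff_subset PowD finite_subset subsetD)
  ultimately show "\<exists>U \<in> sh. T \<subseteq> U \<and> U \<subseteq> S \<and> y \<in> U"
    using assms(3) by auto
qed

lemma mem_rho_TSD_localize:
  assumes S: "S \<in> rho_TSD VI k sh" and "\<And>U. U \<in> sh \<Longrightarrow> U \<subseteq> S \<Longrightarrow> U \<in> sh'"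
  shows "S \<in> rho_TSD VI k sh'"
proof (rule mem_rho_TSDI)
  show "S \<in> SG VI" using S rho_TSD_subset_SG by blast
  fix T y assume "T \<subseteq> S" "card T < k" "y \<in> S"
  then obtain U where "U \<in> sh" "T \<subseteq> U" "U \<subseteq> S" "y \<in> U"
    by (rule mem_rho_TSDE[OF S])
  with assms(2) show "\<exists>U \<in> sh'. T \<subseteq> U \<and> U \<subseteq> S \<and> y \<in> U" by blast
qed

lemma rho_TSD_mono: "sh \<subseteq> sh' \<Longrightarrow> rho_TSD VI k sh \<subseteq> rho_TSD VI k sh'"
  by (blast intro: mem_rho_TSD_localize)

lemma subset_rho_TSD: "sh \<subseteq> SG VI \<Longrightarrow> sh \<subseteq> rho_TSD VI k sh"
  by (blast intro: mem_rho_TSDI)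

lemma rho_TSD_idem: "rho_TSD VI k (rho_TSD VI k sh) = rho_TSD VI k sh"
proof
  show "rho_TSD VI k (rho_TSD VI k sh) \<subseteq> rho_TSD VI k sh"
  proof
    fix S assume S: "S \<in> rho_TSD VI k (rho_TSD VI k sh)"
    show "S \<in> rho_TSD VI k sh"
    proof (rule mem_rho_TSDI)
      show "S \<in> SG VI" using S rho_TSD_subset_SG by blast
      fix T y assume T: "T \<subseteq> S" "card T < k" and y: "y \<in> S"
      obtain U where U: "U \<in> rho_TSD VI k sh" "T \<subseteq> U" "U \<subseteq> S" "y \<in> U"
        by (rule mem_rho_TSDE[OF S T y])
      obtain W where "W \<in> sh" "T \<subseteq> W" "W \<subseteq> U" "y \<in> W"
        by (rule mem_rho_TSDE[OF U(1,2) T(2) U(4)])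
      with U show "\<exists>W \<in> sh. T \<subseteq> W \<and> W \<subseteq> S \<and> y \<in> W" by blast
    qed
  qed
  show "rho_TSD VI k sh \<subseteq> rho_TSD VI k (rho_TSD VI k sh)"
    by (rule subset_rho_TSD[OF rho_TSD_subset_SG])
qed

lemma rho_TSD_subsetI: "sh \<subseteq> rho_TSD VI k sh' \<Longrightarrow> rho_TSD VI k sh \<subseteq> rho_TSD VI k sh'"
  using rho_TSD_mono[of sh "rho_TSD VI k sh'" VI k] rho_TSD_idem[of VI k sh'] by simp

lemma rho_TSD_cong:
  assumes "mono F"
    and F_rho: "\<And>sh. sh \<subseteq> SG VI \<Longrightarrow> F (rho_TSD VI k sh) \<subseteq> rho_TSD VI k (F sh)"
    and "sh1 \<subseteq> SG VI" "sh2 \<subseteq> SG VI" "rho_TSD VI k sh1 = rho_TSD VI k sh2"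
  shows "rho_TSD VI k (F sh1) = rho_TSD VI k (F sh2)"
proof -
  have le: "rho_TSD VI k (F sh) \<subseteq> rho_TSD VI k (F sh')"
    if "sh \<subseteq> SG VI" "sh' \<subseteq> SG VI" "rho_TSD VI k sh = rho_TSD VI k sh'" for sh sh'
  proof (rule rho_TSD_subsetI)
    have "F sh \<subseteq> F (rho_TSD VI k sh)"
      using \<open>mono F\<close> subset_rho_TSD[OF that(1)] by (rule monoD)
    also have "\<dots> \<subseteq> rho_TSD VI k (F sh')"
      using F_rho[OF that(2)] that(3) by simp
    finally show "F sh \<subseteq> rho_TSD VI k (F sh')" .
  qed
  show ?thesis
    using le[OF assms(3-5)] le[OF assms(4,3) assms(5)[symmetric]] by (rule equalityI)
qed

definition amgu_step :: "'v set \<Rightarrow> 'v set set \<Rightarrow> 'v set \<Rightarrow> 'v set \<Rightarrow> 'v set set" where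
  "amgu_step VI sh vx vt =
     (sh - rel (vx \<union> vt) sh) \<union> bin (star VI (rel vx sh)) (star VI (rel vt sh))"

lemma amgu1_eq_amgu_step: "amgu1 VI sh b = amgu_step VI sh {fst b} (vars (snd b))"
  unfolding amgu1_def amgu_step_def Let_def ..

lemma Union_mem_SG: "P \<subseteq> SG VI \<Longrightarrow> P \<noteq> {} \<Longrightarrow> \<Union>P \<in> SG VI"
  unfolding SG_def by fastforce

lemma mem_star_iff: "S \<in> star VI sh \<longleftrightarrow> S \<in> SG VI \<and> (\<exists>A \<subseteq> sh. S = \<Union>A)"
  unfolding star_def by blast

lemma rel_Un: "rel (V \<union> W) sh = rel V sh \<union> rel W sh"
  unfolding rel_def by auto

lemma rel_subset: "rel V sh \<subseteq> sh"
  unfolding rel_def by auto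

lemma rel_mono: "sh \<subseteq> sh' \<Longrightarrow> rel V sh \<subseteq> rel V sh'"
  unfolding rel_def by auto

lemma mem_bin_star_rel_iff:
  assumes "sh \<subseteq> SG VI"
  shows "S \<in> bin (star VI (rel vx sh)) (star VI (rel vt sh)) \<longleftrightarrow>
    (\<exists>P \<subseteq> rel (vx \<union> vt) sh. S = \<Union>P \<and> rel vx P \<noteq> {} \<and> rel vt P \<noteq> {})"
proof
  assume "S \<in> bin (star VI (rel vx sh)) (star VI (rel vt sh))"
  then obtain S1 S2 where S: "S = S1 \<union> S2"
    and "S1 \<in> star VI (rel vx sh)" "S2 \<in> star VI (rel vt sh)"
    unfolding bin_def by blast
  then obtain A B where A: "A \<subseteq> rel vx sh" "S1 = \<Union>A" "S1 \<noteq> {}"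
    and B: "B \<subseteq> rel vt sh" "S2 = \<Union>B" "S2 \<noteq> {}"
    unfolding mem_star_iff SG_def by blast
  have "A \<union> B \<subseteq> rel (vx \<union> vt) sh" using A(1) B(1) by (auto simp: rel_Un)
  moreover have "S = \<Union>(A \<union> B)" using A(2) B(2) S by simp
  moreover have "rel vx (A \<union> B) \<noteq> {}" "rel vt (A \<union> B) \<noteq> {}"
    using A B unfolding rel_def by auto
  ultimately show "\<exists>P \<subseteq> rel (vx \<union> vt) sh. S = \<Union>P \<and> rel vx P \<noteq> {} \<and> rel vt P \<noteq> {}"
    by (intro exI[of _ "A \<union> B"] conjI) assumption+
next
  assume "\<exists>P \<subseteq> rel (vx \<union> vt) sh. S = \<Union>P \<and> rel vx P \<noteq> {} \<and> rel vt P \<noteq> {}"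
  then obtain P where P: "P \<subseteq> rel (vx \<union> vt) sh" "S = \<Union>P" "rel vx P \<noteq> {}" "rel vt P \<noteq> {}"
    by blast
  have "P \<subseteq> sh" using P(1) rel_subset by (rule order_trans)
  have star: "\<Union>(rel V P) \<in> star VI (rel V sh)" if "rel V P \<noteq> {}" for V
  proof -
    have "rel V P \<subseteq> SG VI"
      using rel_subset \<open>P \<subseteq> sh\<close> assms by (rule order_trans[OF order_trans])
    then have "\<Union>(rel V P) \<in> SG VI" using that by (rule Union_mem_SG)
    moreover have "rel V P \<subseteq> rel V sh" using \<open>P \<subseteq> sh\<close> by (rule rel_mono)
    ultimately show ?thesis unfolding mem_star_iff by blast
  qed
  have "P = rel vx P \<union> rel vt P"
    using P(1) rel_subset[of "vx \<union> vt" sh] by (auto simp: rel_def)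
  then have "S = \<Union>(rel vx P) \<union> \<Union>(rel vt P)"
    using P(2) by (metis Union_Un_distrib)
  with star[OF P(3)] star[OF P(4)]
  show "S \<in> bin (star VI (rel vx sh)) (star VI (rel vt sh))"
    unfolding bin_def by blast
qed

lemma star_mono: "sh \<subseteq> sh' \<Longrightarrow> star VI sh \<subseteq> star VI sh'"
  unfolding star_def by auto

lemma bin_mono: "A \<subseteq> A' \<Longrightarrow> B \<subseteq> B' \<Longrightarrow> bin A B \<subseteq> bin A' B'"
  unfolding bin_def by blast

lemma minus_rel_mono: "sh \<subseteq> sh' \<Longrightarrow> sh - rel V sh \<subseteq> sh' - rel V sh'"
  unfolding rel_def by auto

lemma Union_mem_bin_star_rel:
  assumes "sh \<subseteq> SG VI" "P \<subseteq> rel (vx \<union> vt) sh" "rel vx P \<noteq> {}" "rel vt P \<noteq> {}"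
  shows "\<Union>P \<in> bin (star VI (rel vx sh)) (star VI (rel vt sh))"
  using assms(2-4) unfolding mem_bin_star_rel_iff[OF assms(1)] by blast

lemma amgu_step_mono: "sh \<subseteq> sh' \<Longrightarrow> amgu_step VI sh vx vt \<subseteq> amgu_step VI sh' vx vt"
  unfolding amgu_step_def by (intro Un_mono minus_rel_mono bin_mono star_mono rel_mono)

lemma star_subset_SG: "star VI sh \<subseteq> SG VI"
  unfolding star_def by auto

lemma bin_subset_SG: "A \<subseteq> SG VI \<Longrightarrow> B \<subseteq> SG VI \<Longrightarrow> bin A B \<subseteq> SG VI"
  unfolding bin_def SG_def by auto

lemma amgu_step_subset_SG: "sh \<subseteq> SG VI \<Longrightarrow> amgu_step VI sh vx vt \<subseteq> SG VI"
  unfolding amgu_step_def using bin_subset_SG[OF star_subset_SG star_subset_SG] by blast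

lemma rho_TSD_minus_rel_subset:
  "rho_TSD VI k sh - rel V (rho_TSD VI k sh) \<subseteq> rho_TSD VI k (sh - rel V sh)"
proof
  fix S assume "S \<in> rho_TSD VI k sh - rel V (rho_TSD VI k sh)"
  then have "S \<in> rho_TSD VI k sh" "S \<inter> V = {}" unfolding rel_def by auto
  then show "S \<in> rho_TSD VI k (sh - rel V sh)"
    by (elim mem_rho_TSD_localize) (auto simp: rel_def)
qed

lemma rel_rho_TSD_witnessE:
  assumes "P \<subseteq> rho_TSD VI k sh" "1 \<le> k" "rel V P \<noteq> {}"
  obtains U where "U \<in> rel V sh" "U \<subseteq> \<Union>P"
proof -
  obtain C z where C: "C \<in> P" "z \<in> C" "z \<in> V" using assms(3) unfolding rel_def by blast
  from C(1) assms(1) have "C \<in> rho_TSD VI k sh" by blast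
  then obtain U where "U \<in> sh" "U \<subseteq> C" "z \<in> U"
    using assms(2) C(2) by (rule mem_rho_TSD_singletonE)
  with C have "U \<in> rel V sh" "U \<subseteq> \<Union>P" unfolding rel_def by auto
  then show thesis by (rule that)
qed

lemma bin_star_rel_rho_TSD_subset:
  assumes sh: "sh \<subseteq> SG VI" and "2 \<le> k"
  shows "bin (star VI (rel vx (rho_TSD VI k sh))) (star VI (rel vt (rho_TSD VI k sh)))
           \<subseteq> bin (star VI (rel vx sh)) (star VI (rel vt sh))"
proof
  fix S assume "S \<in> bin (star VI (rel vx (rho_TSD VI k sh))) (star VI (rel vt (rho_TSD VI k sh)))"
  then obtain P where P: "P \<subseteq> rel (vx \<union> vt) (rho_TSD VI k sh)" "S = \<Union>P"
    and meets: "rel vx P \<noteq> {}" "rel vt P \<noteq> {}"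
    unfolding mem_bin_star_rel_iff[OF rho_TSD_subset_SG] by blast
  have P_rho: "P \<subseteq> rho_TSD VI k sh" using P(1) rel_subset by (rule order_trans)
  define Q where "Q = rel (vx \<union> vt) {U \<in> sh. U \<subseteq> S}"
  have "rel V Q \<noteq> {}" if V: "V \<subseteq> vx \<union> vt" and meets_V: "rel V P \<noteq> {}" for V
  proof -
    have "1 \<le> k" using \<open>2 \<le> k\<close> by simp
    with P_rho obtain U where "U \<in> rel V sh" "U \<subseteq> S"
      using meets_V unfolding P(2) by (rule rel_rho_TSD_witnessE)
    with V have "U \<in> rel V Q" unfolding Q_def rel_def by blast
    then show ?thesis by blast
  qed
  with meets have "rel vx Q \<noteq> {}" "rel vt Q \<noteq> {}" by auto
  moreover have "Q \<subseteq> rel (vx \<union> vt) sh" unfolding Q_def by (intro rel_mono) blast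
  moreover have "S = \<Union>Q"
  proof
    show "S \<subseteq> \<Union>Q"
    proof
      fix y assume "y \<in> S"
      then obtain C where C: "C \<in> P" "y \<in> C" using P(2) by blast
      with P(1) obtain z where z: "z \<in> C" "z \<in> vx \<union> vt" and "C \<in> rho_TSD VI k sh"
        unfolding rel_def by blast
      then obtain U where "U \<in> sh" "U \<subseteq> C" "y \<in> U" "z \<in> U"
        using \<open>2 \<le> k\<close> \<open>y \<in> C\<close> by (elim mem_rho_TSD_pairE)
      with C(1) P(2) z(2) show "y \<in> \<Union>Q" unfolding Q_def rel_def by blast
    qed
  qed (auto simp: Q_def rel_def)
  ultimately show "S \<in> bin (star VI (rel vx sh)) (star VI (rel vt sh))"
    using Union_mem_bin_star_rel[OF sh] by simp
qed

lemma amgu_step_superset_witness: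
  assumes sh: "sh \<subseteq> SG VI" and "U \<in> sh" "Ua \<in> rel vx sh" "Ub \<in> rel vt sh"
  obtains W where "W \<in> amgu_step VI sh vx vt" "U \<subseteq> W" "W \<subseteq> U \<union> Ua \<union> Ub"
proof (cases "U \<in> rel (vx \<union> vt) sh")
  case False
  with assms(2) have "U \<in> amgu_step VI sh vx vt" unfolding amgu_step_def by blast
  then show thesis by (rule that) auto
next
  case True
  have "{U, Ua, Ub} \<subseteq> rel (vx \<union> vt) sh" using True assms(3,4) by (auto simp: rel_Un)
  moreover have "rel vx {U, Ua, Ub} \<noteq> {}" "rel vt {U, Ua, Ub} \<noteq> {}"
    using assms(3,4) unfolding rel_def by auto
  ultimately have "\<Union>{U, Ua, Ub} \<in> amgu_step VI sh vx vt"
    unfolding amgu_step_def by (intro UnI2 Union_mem_bin_star_rel[OF sh])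
  then show thesis by (rule that) auto
qed

lemma bin_star_rel_rho_TSD_1_subset:
  assumes sh: "sh \<subseteq> SG VI" and "finite VI"
  shows "bin (star VI (rel vx (rho_TSD VI 1 sh))) (star VI (rel vt (rho_TSD VI 1 sh)))
           \<subseteq> rho_TSD VI 1 (amgu_step VI sh vx vt)"
proof
  fix S assume "S \<in> bin (star VI (rel vx (rho_TSD VI 1 sh))) (star VI (rel vt (rho_TSD VI 1 sh)))"
  then obtain P where P: "P \<subseteq> rel (vx \<union> vt) (rho_TSD VI 1 sh)" "S = \<Union>P"
    and meets: "rel vx P \<noteq> {}" "rel vt P \<noteq> {}"
    unfolding mem_bin_star_rel_iff[OF rho_TSD_subset_SG] by blast
  have P_rho: "P \<subseteq> rho_TSD VI 1 sh" using P(1) rel_subset by (rule order_trans)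
  obtain Ua where Ua: "Ua \<in> rel vx sh" "Ua \<subseteq> S"
    using P_rho order_refl meets(1) unfolding P(2) by (rule rel_rho_TSD_witnessE)
  obtain Ub where Ub: "Ub \<in> rel vt sh" "Ub \<subseteq> S"
    using P_rho order_refl meets(2) unfolding P(2) by (rule rel_rho_TSD_witnessE)
  have "P \<noteq> {}" using meets(1) unfolding rel_def by auto
  with order_trans[OF P_rho rho_TSD_subset_SG] have "S \<in> SG VI"
    unfolding P(2) by (rule Union_mem_SG)
  then show "S \<in> rho_TSD VI 1 (amgu_step VI sh vx vt)"
  proof (rule mem_rho_TSD_1I[OF \<open>finite VI\<close>])
    fix y assume "y \<in> S"
    then obtain C where "C \<in> P" "y \<in> C" using P(2) by blast
    with P_rho have "C \<in> rho_TSD VI 1 sh" by blast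
    then obtain U where U: "U \<in> sh" "U \<subseteq> C" "y \<in> U"
      using order_refl \<open>y \<in> C\<close> by (rule mem_rho_TSD_singletonE)
    obtain W where W: "W \<in> amgu_step VI sh vx vt" "U \<subseteq> W" "W \<subseteq> U \<union> Ua \<union> Ub"
      using sh U(1) Ua(1) Ub(1) by (rule amgu_step_superset_witness)
    have "U \<subseteq> S" using U(2) \<open>C \<in> P\<close> P(2) by blast
    with W(3) Ua(2) Ub(2) have "W \<subseteq> S" by blast
    moreover have "y \<in> W" using U(3) W(2) by blast
    ultimately show "\<exists>W \<in> amgu_step VI sh vx vt. W \<subseteq> S \<and> y \<in> W"
      using W(1) by blast
  qed
qed

lemma amgu_step_rho_TSD_subset:
  assumes sh: "sh \<subseteq> SG VI" and "finite VI" and "1 \<le> k"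
  shows "amgu_step VI (rho_TSD VI k sh) vx vt \<subseteq> rho_TSD VI k (amgu_step VI sh vx vt)"
proof -
  have "rho_TSD VI k sh - rel (vx \<union> vt) (rho_TSD VI k sh) \<subseteq> rho_TSD VI k (amgu_step VI sh vx vt)"
    using rho_TSD_minus_rel_subset rho_TSD_mono[of "sh - rel (vx \<union> vt) sh"]
    unfolding amgu_step_def by blast
  moreover have "bin (star VI (rel vx (rho_TSD VI k sh))) (star VI (rel vt (rho_TSD VI k sh)))
                   \<subseteq> rho_TSD VI k (amgu_step VI sh vx vt)"
  proof (cases "k = 1")
    case True
    then show ?thesis using bin_star_rel_rho_TSD_1_subset[OF sh \<open>finite VI\<close>] by simp
  next
    case False
    with \<open>1 \<le> k\<close> have "2 \<le> k" by simp
    then have "bin (star VI (rel vx (rho_TSD VI k sh))) (star VI (rel vt (rho_TSD VI k sh)))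
                 \<subseteq> amgu_step VI sh vx vt"
      unfolding amgu_step_def using bin_star_rel_rho_TSD_subset[OF sh] by blast
    then show ?thesis using subset_rho_TSD[OF amgu_step_subset_SG[OF sh]] by blast
  qed
  ultimately show ?thesis unfolding amgu_step_def by (rule Un_least)
qed

lemma amgu_mono: "sh \<subseteq> sh' \<Longrightarrow> amgu VI sh bs \<subseteq> amgu VI sh' bs"
proof (induction bs arbitrary: sh sh')
  case (Cons b bs)
  then show ?case by (simp add: amgu1_eq_amgu_step amgu_step_mono)
qed simp

lemma amgu_rho_TSD_subset:
  assumes "sh \<subseteq> SG VI" and "finite VI" and "1 \<le> k"
  shows "amgu VI (rho_TSD VI k sh) bs \<subseteq> rho_TSD VI k (amgu VI sh bs)"
  using assms(1)
proof (induction bs arbitrary: sh)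
  case (Cons b bs)
  have "amgu VI (rho_TSD VI k sh) (b # bs) = amgu VI (amgu1 VI (rho_TSD VI k sh) b) bs"
    by simp
  also have "\<dots> \<subseteq> amgu VI (rho_TSD VI k (amgu1 VI sh b)) bs"
    using amgu_step_rho_TSD_subset[OF Cons.prems assms(2,3)]
    by (simp add: amgu1_eq_amgu_step amgu_mono)
  also have "\<dots> \<subseteq> rho_TSD VI k (amgu VI (amgu1 VI sh b) bs)"
    using Cons.IH amgu_step_subset_SG[OF Cons.prems] by (simp add: amgu1_eq_amgu_step)
  finally show ?case by simp
qed simp

lemma Un_rho_TSD_subset: "sh' \<subseteq> SG VI \<Longrightarrow> sh' \<union> rho_TSD VI k sh \<subseteq> rho_TSD VI k (sh' \<union> sh)"
  using subset_rho_TSD[of sh'] rho_TSD_mono[of sh' "sh' \<union> sh"] rho_TSD_mono[of sh "sh' \<union> sh"]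
  by blast

lemma proj_mono: "sh \<subseteq> sh' \<Longrightarrow> proj VI sh V \<subseteq> proj VI sh' V"
  unfolding proj_def by blast

lemma proj_subset_SG: "V \<subseteq> VI \<Longrightarrow> sh \<subseteq> SG VI \<Longrightarrow> proj VI sh V \<subseteq> SG VI"
  unfolding proj_def SG_def by blast

lemma proj_rho_TSD_subset:
  assumes "V \<subseteq> VI" and "sh \<subseteq> SG VI"
  shows "proj VI (rho_TSD VI k sh) V \<subseteq> rho_TSD VI k (proj VI sh V)"
proof
  fix S assume "S \<in> proj VI (rho_TSD VI k sh) V"
  then consider (restrict) S0 where "S = S0 \<inter> V" "S0 \<in> rho_TSD VI k sh" "S0 \<inter> V \<noteq> {}"
    | (outside) x where "S = {x}" "x \<in> VI - V"
    unfolding proj_def by blast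
  then show "S \<in> rho_TSD VI k (proj VI sh V)"
  proof cases
    case restrict
    show ?thesis
    proof (rule mem_rho_TSDI)
      show "S \<in> SG VI" using restrict rho_TSD_subset_SG unfolding SG_def by blast
      fix T y assume "T \<subseteq> S" "card T < k" "y \<in> S"
      have "T \<subseteq> S0" "y \<in> S0" using \<open>T \<subseteq> S\<close> \<open>y \<in> S\<close> restrict(1) by auto
      then obtain U where U: "U \<in> sh" "T \<subseteq> U" "U \<subseteq> S0" "y \<in> U"
        using mem_rho_TSDE[OF restrict(2) _ \<open>card T < k\<close>] by blast
      have "y \<in> V" using \<open>y \<in> S\<close> restrict(1) by blast
      with U have "U \<inter> V \<in> proj VI sh V" unfolding proj_def by blast
      moreover have "T \<subseteq> U \<inter> V" "U \<inter> V \<subseteq> S" "y \<in> U \<inter> V"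
        using U \<open>T \<subseteq> S\<close> \<open>y \<in> V\<close> restrict(1) by auto
      ultimately show "\<exists>W \<in> proj VI sh V. T \<subseteq> W \<and> W \<subseteq> S \<and> y \<in> W" by blast
    qed
  next
    case outside
    then have "S \<in> proj VI sh V" unfolding proj_def by auto
    then show ?thesis using subset_rho_TSD[OF proj_subset_SG[OF assms]] by blast
  qed
qed

theorem theorem3p16:
  fixes VI :: "'v set" and n k :: nat
    and sh1 sh2 :: "'v set set"
  assumes "finite VI" and "card VI = n"
    and "sh1 \<in> SH VI" and "sh2 \<in> SH VI"
    and "1 \<le> k" and "k \<le> n"
    and "rho_TSD VI k sh1 = rho_TSD VI k sh2"
  shows "(\<forall>(bs :: ('v \<times> ('f, 'v) trm) list). distinct bs \<and> is_subst VI (set bs) \<longrightarrow>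
            rho_TSD VI k (amgu VI sh1 bs) = rho_TSD VI k (amgu VI sh2 bs))
       \<and> (\<forall>sh' \<in> SH VI. rho_TSD VI k (sh' \<union> sh1) = rho_TSD VI k (sh' \<union> sh2))
       \<and> (\<forall>V \<in> Pow VI. rho_TSD VI k (proj VI sh1 V) = rho_TSD VI k (proj VI sh2 V))"
proof -
  have sh: "sh1 \<subseteq> SG VI" "sh2 \<subseteq> SG VI" using assms(3,4) unfolding SH_def by auto
  note cong = rho_TSD_cong[OF _ _ sh assms(7)]
  have "rho_TSD VI k (amgu VI sh1 bs) = rho_TSD VI k (amgu VI sh2 bs)"
    for bs :: "('v \<times> ('f, 'v) trm) list"
  proof (rule cong[where F = "\<lambda>sh. amgu VI sh bs"])
    show "mono (\<lambda>sh. amgu VI sh bs)" by (rule monoI) (rule amgu_mono)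
  qed (rule amgu_rho_TSD_subset[OF _ assms(1,5)])
  moreover have "rho_TSD VI k (sh' \<union> sh1) = rho_TSD VI k (sh' \<union> sh2)" if "sh' \<in> SH VI" for sh'
  proof (rule cong[where F = "(\<union>) sh'"])
    show "mono ((\<union>) sh')" by (rule monoI) blast
  qed (rule Un_rho_TSD_subset, use that in \<open>simp add: SH_def\<close>)
  moreover have "rho_TSD VI k (proj VI sh1 V) = rho_TSD VI k (proj VI sh2 V)" if "V \<in> Pow VI" for V
  proof (rule cong[where F = "\<lambda>sh. proj VI sh V"])
    show "mono (\<lambda>sh. proj VI sh V)" by (rule monoI) (rule proj_mono)
  qed (use that in \<open>simp add: proj_rho_TSD_subset\<close>)
  ultimately show ?thesis by blast
qed

end
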